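(* Let $\kappa\in\mathbb{R}$ and $m>0$, and let $L_{\kappa,m}$ be as defined in the context. Let $0<\rho_1^*<\rho_2^*<\dots<R_\kappa$ be the points in $(0,R_\kappa)$ at which $L_{\kappa,m}$ attains local maxima or minima. Then the sequence $|L_{\kappa,m}(\rho_i^* )|$ is decreasing in $i$. Moreover, the first local maximum $\rho_1^*$ satisfies $\rho_1^*\ge\sin_\kappa^{-1}(m)$.
   Context: Define $\sin_\kappa(\rho)=\sin(\sqrt{\kappa}\rho)/\sqrt{\kappa}$ if $\kappa>0$, $\sin_\kappa(\rho)=\rho$ if $\kappa=0$, $\sin_\kappa(\rho)=\sinh(\sqrt{-\kappa}\rho)/\sqrt{-\kappa}$ if $\kappa<0$; $\cos_\kappa=(\sin_\kappa)'$, $\cot_\kappa=\cos_\kappa/\sin_\kappa$, $\tan_\kappa=1/\cot_\kappa$. Let $R_\kappa=\infty$ if $\kappa\le0$ and $R_\kappa=\pi/(2\sqrt{\kappa})$ if $\kappa>0$; $\sin_\kappa^{-1}$ denotes the inverse of $\sin_\kappa$ on $[0,R_\kappa)$. $L_{\kappa,m}$ is a solution of \[\sin_\kappa^2(\rho)L''(\rho)+\sin_\kappa(\rho)\cos_\kappa(\rho)L'(\rho)+(\sin_\kappa^2(\rho)-m^2)L(\rho)=0\] that is well defined (regular) at $\rho=0$ and positive on some interval $(0,\varepsilon)$ (so $L_{\kappa,m}(0)=0$ for $m>0$). *)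

theory Defs
  imports "HOL-Analysis.Analysis"
begin

definition sin_k :: "real \<Rightarrow> real \<Rightarrow> real" where
  "sin_k \<kappa> \<rho> = (if \<kappa> > 0 then sin (sqrt \<kappa> * \<rho>) / sqrt \<kappa>
                 else if \<kappa> = 0 then \<rho>
                 else sinh (sqrt (-\<kappa>) * \<rho>) / sqrt (-\<kappa>))"

definition cos_k :: "real \<Rightarrow> real \<Rightarrow> real" where
  "cos_k \<kappa> \<rho> = (if \<kappa> > 0 then cos (sqrt \<kappa> * \<rho>)
                 else if \<kappa> = 0 then 1
                 else cosh (sqrt (-\<kappa>) * \<rho>))"

definition R_k :: "real \<Rightarrow> ereal" where
  "R_k \<kappa> = (if \<kappa> \<le> 0 then \<infinity> else ereal (pi / (2 * sqrt \<kappa>)))"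

definition dom_k :: "real \<Rightarrow> real set" where
  "dom_k \<kappa> = {\<rho>. 0 < \<rho> \<and> ereal \<rho> < R_k \<kappa>}"

definition arcsin_k :: "real \<Rightarrow> real \<Rightarrow> real" where
  "arcsin_k \<kappa> = inv_into {\<rho>. 0 \<le> \<rho> \<and> ereal \<rho> < R_k \<kappa>} (sin_k \<kappa>)"

definition local_extremum_at :: "(real \<Rightarrow> real) \<Rightarrow> real \<Rightarrow> bool" where
  "local_extremum_at f x \<longleftrightarrow>
     (\<exists>e>0. \<forall>y. \<bar>y - x\<bar> < e \<longrightarrow> f y \<le> f x) \<or>
     (\<exists>e>0. \<forall>y. \<bar>y - x\<bar> < e \<longrightarrow> f x \<le> f y)"

end

theory Submission
  imports Defs
begin

text \<open>
  Write \<open>s = sin_k \<kappa>\<close>, \<open>q = s\<^sup>2 - m\<^sup>2\<close> and \<open>g = s L'\<close>. The equation says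
  \<open>g' = - q L / s\<close>. Up to the turning point \<open>s \<rho> = m\<close> we have \<open>q \<le> 0\<close>, so \<open>g\<close> increases
  while \<open>L > 0\<close>; if \<open>g\<close> were ever \<open>\<le> 0\<close> there, it would be \<open>\<le> -c\<close> near \<open>0\<close>, forcing
  \<open>L' \<le> -c'/\<rho>\<close> and a logarithmic blow-up of \<open>L\<close> at \<open>0\<close>, which regularity excludes.
  Hence \<open>L, L' > 0\<close> up to \<open>arcsin_k \<kappa> m\<close>, and every extremum lies beyond it.
  Beyond the turning point the energy \<open>L\<^sup>2 + g\<^sup>2 / q\<close> has derivative
  \<open>-2 s cos_k g\<^sup>2 / q\<^sup>2 \<le> 0\<close> and equals \<open>L\<^sup>2\<close> at extrema. It cannot be constant on an
  interval: then \<open>L' = 0\<close> there, so \<open>L = 0\<close> by the equation, whereas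
  \<open>q L\<^sup>2 + g\<^sup>2\<close> is nondecreasing (its derivative is \<open>2 s cos_k L\<^sup>2\<close>) and positive at the
  turning point.
\<close>

lemma less_R_k_iff: "ereal x < R_k \<kappa> \<longleftrightarrow> (0 < \<kappa> \<longrightarrow> x < pi / (2 * sqrt \<kappa>))"
  by (simp add: R_k_def)

lemma sin_k_0 [simp]: "sin_k \<kappa> 0 = 0"
  by (simp add: sin_k_def)

lemma sin_k_has_real_derivative: "(sin_k \<kappa> has_real_derivative cos_k \<kappa> x) (at x)"
proof -
  consider "\<kappa> > 0" | "\<kappa> = 0" | "\<kappa> < 0" by linarith
  then show ?thesis
  proof cases
    case 1
    then have "sin_k \<kappa> = (\<lambda>r. sin (sqrt \<kappa> * r) / sqrt \<kappa>)"
      by (auto simp: sin_k_def fun_eq_iff)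
    with 1 show ?thesis by (auto intro!: derivative_eq_intros simp: cos_k_def mult.assoc)
  next
    case 2
    then have "sin_k \<kappa> = (\<lambda>r. r)" by (auto simp: sin_k_def fun_eq_iff)
    with 2 show ?thesis by (auto intro!: derivative_eq_intros simp: cos_k_def)
  next
    case 3
    then have "sin_k \<kappa> = (\<lambda>r. sinh (sqrt (-\<kappa>) * r) / sqrt (-\<kappa>))"
      by (auto simp: sin_k_def fun_eq_iff)
    with 3 show ?thesis by (auto intro!: derivative_eq_intros simp: cos_k_def mult.assoc)
  qed
qed

lemma isCont_sin_k: "isCont (sin_k \<kappa>) x"
  using sin_k_has_real_derivative DERIV_isCont by blast

lemma cos_k_pos:
  assumes "0 \<le> x" "ereal x < R_k \<kappa>"
  shows "0 < cos_k \<kappa> x"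
proof (cases "0 < \<kappa>")
  case True
  have "0 \<le> sqrt \<kappa> * x"
    using True assms by simp
  then have "- (pi / 2) < sqrt \<kappa> * x"
    using pi_gt_zero by linarith
  moreover have "sqrt \<kappa> * x < pi / 2"
    using True assms by (simp add: less_R_k_iff field_simps)
  ultimately show ?thesis
    using True by (simp add: cos_k_def cos_gt_zero_pi)
qed (auto simp: cos_k_def)

lemma sin_k_strict_mono:
  assumes "0 \<le> x" "x < y" "ereal y < R_k \<kappa>"
  shows "sin_k \<kappa> x < sin_k \<kappa> y"
proof -
  obtain z where z: "x < z" "z < y" "sin_k \<kappa> y - sin_k \<kappa> x = (y - x) * cos_k \<kappa> z"
    using MVT2[OF assms(2) sin_k_has_real_derivative] by blast
  have "0 < cos_k \<kappa> z"
    using z assms by (intro cos_k_pos) (auto simp: less_R_k_iff)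
  with z have "0 < sin_k \<kappa> y - sin_k \<kappa> x"
    by simp
  then show ?thesis by simp
qed

lemma sin_k_pos: "x \<in> dom_k \<kappa> \<Longrightarrow> 0 < sin_k \<kappa> x"
  using sin_k_strict_mono[of 0 x \<kappa>] by (simp add: dom_k_def)

lemma sin_k_le_linear:
  assumes "0 < x" "x \<le> b"
  shows "sin_k \<kappa> x \<le> max 1 (cos_k \<kappa> b) * x"
proof -
  obtain z where z: "0 < z" "z < x" "sin_k \<kappa> x = x * cos_k \<kappa> z"
    using MVT2[OF assms(1) sin_k_has_real_derivative] by auto
  have "cos_k \<kappa> z \<le> max 1 (cos_k \<kappa> b)"
  proof (cases "\<kappa> < 0")
    case True
    have "sqrt (- \<kappa>) * z \<le> sqrt (- \<kappa>) * b"
      using True z assms by (intro mult_left_mono) auto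
    then have "cosh (sqrt (- \<kappa>) * z) \<le> cosh (sqrt (- \<kappa>) * b)"
      using True z by (subst cosh_real_nonneg_le_iff) auto
    with True show ?thesis by (simp add: cos_k_def)
  next
    case False
    then have "cos_k \<kappa> z \<le> 1"
      by (auto simp: cos_k_def)
    then show ?thesis by simp
  qed
  with z show ?thesis by (simp add: mult.commute)
qed

lemma arcsin_k_below:
  assumes "x \<in> dom_k \<kappa>" "0 < y" "y \<le> sin_k \<kappa> x"
  shows "arcsin_k \<kappa> y \<in> dom_k \<kappa> \<and> arcsin_k \<kappa> y \<le> x \<and> sin_k \<kappa> (arcsin_k \<kappa> y) = y"
proof -
  obtain r where r: "0 \<le> r" "r \<le> x" "sin_k \<kappa> r = y"
    using IVT[of "sin_k \<kappa>" 0 y x] assms isCont_sin_k by (auto simp: dom_k_def)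
  have "strict_mono_on {\<rho>. 0 \<le> \<rho> \<and> ereal \<rho> < R_k \<kappa>} (sin_k \<kappa>)"
    by (intro strict_mono_onI sin_k_strict_mono) auto
  then have "arcsin_k \<kappa> y = r"
    unfolding arcsin_k_def using r assms
    by (intro inv_into_f_eq strict_mono_on_imp_inj_on) (auto simp: dom_k_def less_R_k_iff)
  moreover have "r \<noteq> 0"
    using r assms by auto
  ultimately show ?thesis
    using r assms by (auto simp: dom_k_def less_R_k_iff)
qed

lemma local_extremum_at_imp_deriv_zero:
  assumes "local_extremum_at f x" "(f has_real_derivative f') (at x)"
  shows "f' = 0"
  using assms(1) unfolding local_extremum_at_def
proof (elim disjE exE conjE)
  fix e assume "0 < e" "\<forall>y. \<bar>y - x\<bar> < e \<longrightarrow> f y \<le> f x"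
  then show "f' = 0"
    using DERIV_local_max[OF assms(2)] by (simp add: abs_minus_commute)
next
  fix e assume "0 < e" "\<forall>y. \<bar>y - x\<bar> < e \<longrightarrow> f x \<le> f y"
  then show "f' = 0"
    using DERIV_local_min[OF assms(2)] by (simp add: abs_minus_commute)
qed

lemma deriv_le_neg_inverse_imp_unbounded:
  fixes f f' :: "real \<Rightarrow> real"
  assumes "0 < b" "0 < c"
    and deriv: "\<And>x. 0 < x \<Longrightarrow> x \<le> b \<Longrightarrow> (f has_real_derivative f' x) (at x)"
    and bound: "\<And>x. 0 < x \<Longrightarrow> x \<le> b \<Longrightarrow> f' x \<le> - c / x"
  shows "\<not> bdd_above (f ` {0<..b})"
proof
  assume "bdd_above (f ` {0<..b})"
  then obtain M where "\<forall>x\<in>{0<..b}. f x \<le> M"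
    by (auto simp: bdd_above_def)
  then have M: "\<And>x. 0 < x \<Longrightarrow> x \<le> b \<Longrightarrow> f x \<le> M"
    by auto
  have log_growth: "f b + c * (ln b - ln x) \<le> f x" if "0 < x" "x \<le> b" for x
  proof -
    have "f b + c * ln b \<le> f x + c * ln x"
    proof (rule DERIV_nonpos_imp_nonincreasing[OF \<open>x \<le> b\<close>])
      fix t assume t: "x \<le> t" "t \<le> b"
      have "((\<lambda>t. f t + c * ln t) has_real_derivative f' t + c * (1 / t)) (at t)"
        using deriv[of t] t that by (auto intro!: derivative_eq_intros)
      moreover have "f' t + c * (1 / t) \<le> 0"
        using bound[of t] t that by simp
      ultimately show "\<exists>y. ((\<lambda>t. f t + c * ln t) has_real_derivative y) (at t) \<and> y \<le> 0"
        by blast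
    qed
    then show ?thesis by (simp add: algebra_simps)
  qed
  define x where "x = b * exp (- \<bar>M - f b\<bar> / c - 1)"
  have "0 \<le> \<bar>M - f b\<bar> / c"
    using \<open>0 < c\<close> by simp
  then have x: "0 < x" "x \<le> b"
    using \<open>0 < b\<close> by (auto simp: x_def)
  have "ln b - ln x = \<bar>M - f b\<bar> / c + 1"
    using \<open>0 < b\<close> by (simp add: x_def ln_mult)
  with log_growth[OF x] \<open>0 < c\<close> have "M + c \<le> f x"
    by (simp add: distrib_left)
  with M[OF x] \<open>0 < c\<close> show False by simp
qed

lemma continuous_on_first_nonpos:
  fixes f :: "real \<Rightarrow> real"
  assumes "continuous_on {a..b} f" "0 < f a" "f b \<le> 0" "a \<le> b"
  obtains z where "a < z" "z \<le> b" "f z \<le> 0" "\<And>t. a \<le> t \<Longrightarrow> t < z \<Longrightarrow> 0 < f t"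
proof -
  define K where "K = {a..b} \<inter> f -` {..0}"
  have "closed K"
    unfolding K_def by (rule continuous_closed_preimage[OF assms(1)]) auto
  moreover have "b \<in> K" "bdd_below K"
    using assms by (auto simp: K_def)
  ultimately have "Inf K \<in> K"
    by (intro closed_contains_Inf) auto
  moreover have "0 < f t" if "a \<le> t" "t < Inf K" for t
  proof (rule ccontr)
    assume "\<not> 0 < f t"
    with that \<open>Inf K \<in> K\<close> have "t \<in> K"
      by (auto simp: K_def)
    with cInf_lower[OF _ \<open>bdd_below K\<close>] that show False
      by fastforce
  qed
  moreover have "Inf K \<noteq> a"
    using \<open>Inf K \<in> K\<close> assms(2) by (auto simp: K_def)
  ultimately show ?thesis
    using that[of "Inf K"] by (force simp: K_def)
qed

(* For \<kappa> = 0 the equation is Bessel's equation of order m. *)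
locale sin_k_bessel_solution =
  fixes \<kappa> m :: real and L L' L'' :: "real \<Rightarrow> real"
  assumes m_pos: "0 < m"
    and L_continuous: "continuous_on {\<rho>. 0 \<le> \<rho> \<and> ereal \<rho> < R_k \<kappa>} L"
    and L_deriv: "\<And>\<rho>. \<rho> \<in> dom_k \<kappa> \<Longrightarrow> (L has_real_derivative L' \<rho>) (at \<rho>)"
    and L'_deriv: "\<And>\<rho>. \<rho> \<in> dom_k \<kappa> \<Longrightarrow> (L' has_real_derivative L'' \<rho>) (at \<rho>)"
    and ode: "\<And>\<rho>. \<rho> \<in> dom_k \<kappa> \<Longrightarrow>
       (sin_k \<kappa> \<rho>)\<^sup>2 * L'' \<rho> + sin_k \<kappa> \<rho> * cos_k \<kappa> \<rho> * L' \<rho>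
         + ((sin_k \<kappa> \<rho>)\<^sup>2 - m\<^sup>2) * L \<rho> = 0"
    and L_pos_near_0: "\<exists>\<epsilon>>0. \<forall>\<rho>. 0 < \<rho> \<and> \<rho> < \<epsilon> \<longrightarrow> L \<rho> > 0"
begin

definition potential :: "real \<Rightarrow> real" where
  "potential \<rho> = (sin_k \<kappa> \<rho>)\<^sup>2 - m\<^sup>2"

definition flux :: "real \<Rightarrow> real" where
  "flux \<rho> = sin_k \<kappa> \<rho> * L' \<rho>"

definition energy :: "real \<Rightarrow> real" where
  "energy \<rho> = (L \<rho>)\<^sup>2 + (flux \<rho>)\<^sup>2 / potential \<rho>"

definition weighted_energy :: "real \<Rightarrow> real" where
  "weighted_energy \<rho> = potential \<rho> * (L \<rho>)\<^sup>2 + (flux \<rho>)\<^sup>2"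

lemma potential_neg: "x \<in> dom_k \<kappa> \<Longrightarrow> sin_k \<kappa> x < m \<Longrightarrow> potential x < 0"
  using sin_k_pos[of x \<kappa>] power_strict_mono[of "sin_k \<kappa> x" m 2]
  by (simp add: potential_def)

lemma potential_pos: "x \<in> dom_k \<kappa> \<Longrightarrow> m < sin_k \<kappa> x \<Longrightarrow> 0 < potential x"
  using m_pos power_strict_mono[of m "sin_k \<kappa> x" 2] by (simp add: potential_def)

lemma flux_has_real_derivative:
  assumes "x \<in> dom_k \<kappa>"
  shows "(flux has_real_derivative - potential x * L x / sin_k \<kappa> x) (at x)"
proof -
  have "(flux has_real_derivative cos_k \<kappa> x * L' x + sin_k \<kappa> x * L'' x) (at x)"
    unfolding flux_def [abs_def]
    using assms by (auto intro!: derivative_eq_intros sin_k_has_real_derivative L_deriv L'_deriv)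
  moreover have "cos_k \<kappa> x * L' x + sin_k \<kappa> x * L'' x = - potential x * L x / sin_k \<kappa> x"
    using ode[OF assms] sin_k_pos[OF assms]
    by (simp add: potential_def field_simps power2_eq_square)
  ultimately show ?thesis by simp
qed

lemma continuous_on_L: "0 \<le> a \<Longrightarrow> ereal b < R_k \<kappa> \<Longrightarrow> continuous_on {a..b} L"
  by (rule continuous_on_subset[OF L_continuous]) (auto simp: less_R_k_iff)

lemma continuous_on_flux:
  assumes "0 < a" "b \<in> dom_k \<kappa>"
  shows "continuous_on {a..b} flux"
proof (intro continuous_at_imp_continuous_on ballI)
  fix t assume "t \<in> {a..b}"
  then have "t \<in> dom_k \<kappa>"
    using assms by (auto simp: dom_k_def less_R_k_iff)
  then show "isCont flux t"
    using flux_has_real_derivative DERIV_isCont by blast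
qed

lemma bdd_above_L: "ereal b < R_k \<kappa> \<Longrightarrow> bdd_above (L ` {0<..b})"
proof -
  assume "ereal b < R_k \<kappa>"
  then have "bounded (L ` {0..b})"
    by (intro compact_imp_bounded compact_continuous_image continuous_on_L) auto
  then show ?thesis
    by (rule bdd_above_mono[OF bounded_imp_bdd_above]) auto
qed

lemma flux_strict_mono_before_turning:
  assumes b: "b \<in> dom_k \<kappa>" "sin_k \<kappa> b \<le> m" and L_pos: "\<And>t. 0 < t \<Longrightarrow> t < b \<Longrightarrow> 0 < L t"
    and xy: "0 < x" "x < y" "y \<le> b"
  shows "flux x < flux y"
proof (rule DERIV_pos_imp_increasing_open[OF xy(2)])
  fix t assume t: "x < t" "t < y"
  then have t_dom: "t \<in> dom_k \<kappa>"
    using b xy by (auto simp: dom_k_def less_R_k_iff)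
  have "sin_k \<kappa> t < sin_k \<kappa> b"
    using b t xy by (intro sin_k_strict_mono) (auto simp: dom_k_def)
  then have "potential t < 0"
    using potential_neg[OF t_dom] b by simp
  with L_pos[of t] t xy sin_k_pos[OF t_dom]
  have "0 < - potential t * L t / sin_k \<kappa> t"
    by (simp add: mult_neg_pos divide_neg_pos)
  with flux_has_real_derivative[OF t_dom]
  show "\<exists>d. (flux has_real_derivative d) (at t) \<and> 0 < d"
    by blast
next
  show "continuous_on {x..y} flux"
    using xy b by (intro continuous_on_flux) (auto simp: dom_k_def less_R_k_iff)
qed

lemma flux_pos_before_turning:
  assumes b: "b \<in> dom_k \<kappa>" "sin_k \<kappa> b \<le> m" and L_pos: "\<And>t. 0 < t \<Longrightarrow> t < b \<Longrightarrow> 0 < L t"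
    and x: "0 < x" "x \<le> b"
  shows "0 < flux x"
proof (rule ccontr)
  assume "\<not> 0 < flux x"
  define x1 where "x1 = x / 2"
  have x1: "0 < x1" "x1 < x" "x1 \<in> dom_k \<kappa>"
    using x b by (auto simp: x1_def dom_k_def less_R_k_iff)
  define c where "c = - flux x1"
  have "0 < c"
    using flux_strict_mono_before_turning[OF b L_pos, of x1 x] x x1 \<open>\<not> 0 < flux x\<close>
    by (simp add: c_def)
  define C where "C = max 1 (cos_k \<kappa> x1)"
  have "0 < C" by (simp add: C_def)
  have "L' t \<le> - (c / C) / t" if t: "0 < t" "t \<le> x1" for t
  proof -
    have s: "0 < sin_k \<kappa> t" "sin_k \<kappa> t \<le> C * t"
      using sin_k_pos[of t \<kappa>] sin_k_le_linear[OF t] x1 t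
      by (auto simp: C_def dom_k_def less_R_k_iff)
    have "flux t \<le> - c"
      using flux_strict_mono_before_turning[OF b L_pos, of t x1] t x1 x
      by (cases "t = x1") (auto simp: c_def)
    then have "L' t \<le> - c / sin_k \<kappa> t"
      using s by (simp add: flux_def field_simps mult.commute)
    also have "\<dots> \<le> - c / (C * t)"
      using s \<open>0 < c\<close> \<open>0 < C\<close> t by (simp add: frac_le)
    finally show ?thesis by simp
  qed
  moreover have "(L has_real_derivative L' t) (at t)" if "0 < t" "t \<le> x1" for t
    using that x1 by (intro L_deriv) (auto simp: dom_k_def less_R_k_iff)
  ultimately have "\<not> bdd_above (L ` {0<..x1})"
    using \<open>0 < c\<close> \<open>0 < C\<close> x1
    by (intro deriv_le_neg_inverse_imp_unbounded[of x1 "c / C" L L']) auto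
  with bdd_above_L[of x1] x1 show False
    by (simp add: dom_k_def)
qed

lemma L_pos_before_turning:
  assumes x: "x \<in> dom_k \<kappa>" "sin_k \<kappa> x \<le> m"
  shows "0 < L x"
proof (rule ccontr)
  assume "\<not> 0 < L x"
  obtain \<epsilon> where \<epsilon>: "0 < \<epsilon>" "\<And>\<rho>. 0 < \<rho> \<Longrightarrow> \<rho> < \<epsilon> \<Longrightarrow> 0 < L \<rho>"
    using L_pos_near_0 by blast
  define a where "a = min \<epsilon> x / 2"
  have a: "0 < a" "a < \<epsilon>" "a < x" "0 < L a"
    using \<epsilon> x by (auto simp: a_def dom_k_def)
  obtain z where z: "a < z" "z \<le> x" "L z \<le> 0" and L_pos_before: "\<And>t. a \<le> t \<Longrightarrow> t < z \<Longrightarrow> 0 < L t"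
    using continuous_on_first_nonpos[of a x L] continuous_on_L[of a x] a x \<open>\<not> 0 < L x\<close>
    by (auto simp: dom_k_def)
  have z_dom: "z \<in> dom_k \<kappa>" "sin_k \<kappa> z \<le> m"
    using z a x sin_k_strict_mono[of z x \<kappa>]
    by (auto simp: dom_k_def less_R_k_iff le_less)
  have L_pos: "0 < L t" if "0 < t" "t < z" for t
    using \<epsilon> L_pos_before a that by (cases "t < a") auto
  have "L a < L z"
  proof (rule DERIV_pos_imp_increasing_open[OF \<open>a < z\<close>])
    fix t assume t: "a < t" "t < z"
    then have t_dom: "t \<in> dom_k \<kappa>"
      using a z_dom by (auto simp: dom_k_def less_R_k_iff)
    have "0 < flux t"
      using flux_pos_before_turning[OF z_dom L_pos, of t] a t by simp
    then have "0 < L' t"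
      using sin_k_pos[OF t_dom] by (simp add: flux_def zero_less_mult_iff)
    with L_deriv[OF t_dom] show "\<exists>d. (L has_real_derivative d) (at t) \<and> 0 < d"
      by blast
  next
    show "continuous_on {a..z} L"
      using a z_dom by (intro continuous_on_L) (auto simp: dom_k_def)
  qed
  with a z show False by simp
qed

lemma L'_pos_before_turning:
  assumes x: "x \<in> dom_k \<kappa>" "sin_k \<kappa> x \<le> m"
  shows "0 < L' x"
proof -
  have "0 < L t" if "0 < t" "t < x" for t
    using that x sin_k_strict_mono[of t x \<kappa>]
    by (intro L_pos_before_turning) (auto simp: dom_k_def less_R_k_iff)
  then have "0 < flux x"
    using flux_pos_before_turning[OF x] x by (auto simp: dom_k_def)
  then show ?thesis
    using sin_k_pos[OF x(1)] by (simp add: flux_def zero_less_mult_iff)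
qed

lemma extremum_beyond_turning:
  assumes "x \<in> dom_k \<kappa>" "local_extremum_at L x"
  shows "m < sin_k \<kappa> x"
  using local_extremum_at_imp_deriv_zero[OF assms(2) L_deriv[OF assms(1)]]
    L'_pos_before_turning[OF assms(1)] by force

lemma arcsin_k_le_extremum:
  assumes "x \<in> dom_k \<kappa>" "local_extremum_at L x"
  shows "arcsin_k \<kappa> m \<le> x"
  using arcsin_k_below[OF assms(1) m_pos] extremum_beyond_turning[OF assms] by simp

lemma potential_has_real_derivative:
  "(potential has_real_derivative 2 * sin_k \<kappa> x * cos_k \<kappa> x) (at x)"
  unfolding potential_def [abs_def]
  by (auto intro!: derivative_eq_intros sin_k_has_real_derivative)

lemma weighted_energy_has_real_derivative:
  assumes "x \<in> dom_k \<kappa>"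
  shows "(weighted_energy has_real_derivative 2 * sin_k \<kappa> x * cos_k \<kappa> x * (L x)\<^sup>2) (at x)"
proof -
  have "(weighted_energy has_real_derivative
          2 * sin_k \<kappa> x * cos_k \<kappa> x * (L x)\<^sup>2 + potential x * (2 * L x * L' x)
          + 2 * flux x * (- potential x * L x / sin_k \<kappa> x)) (at x)"
    unfolding weighted_energy_def [abs_def]
    by (auto intro!: derivative_eq_intros potential_has_real_derivative L_deriv[OF assms]
          flux_has_real_derivative[OF assms])
  moreover have "potential x * (2 * L x * L' x) + 2 * flux x * (- potential x * L x / sin_k \<kappa> x) = 0"
    using sin_k_pos[OF assms] by (simp add: flux_def)
  ultimately show ?thesis by simp
qed

lemma energy_has_real_derivative:
  assumes "x \<in> dom_k \<kappa>" "potential x \<noteq> 0"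
  shows "(energy has_real_derivative
           - 2 * sin_k \<kappa> x * cos_k \<kappa> x * (flux x)\<^sup>2 / (potential x)\<^sup>2) (at x)"
proof -
  have "(energy has_real_derivative
          2 * L x * L' x + (2 * flux x * (- potential x * L x / sin_k \<kappa> x) * potential x
            - (flux x)\<^sup>2 * (2 * sin_k \<kappa> x * cos_k \<kappa> x)) / (potential x)\<^sup>2) (at x)"
    unfolding energy_def [abs_def] using assms(2)
    by (auto intro!: derivative_eq_intros potential_has_real_derivative L_deriv[OF assms(1)]
          flux_has_real_derivative[OF assms(1)] simp: power2_eq_square)
  moreover have "2 * L x * L' x + (2 * flux x * (- potential x * L x / sin_k \<kappa> x) * potential x
            - (flux x)\<^sup>2 * (2 * sin_k \<kappa> x * cos_k \<kappa> x)) / (potential x)\<^sup>2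
      = - 2 * sin_k \<kappa> x * cos_k \<kappa> x * (flux x)\<^sup>2 / (potential x)\<^sup>2"
    using sin_k_pos[OF assms(1)] assms(2) by (simp add: flux_def field_simps power2_eq_square)
  ultimately show ?thesis by simp
qed

lemma weighted_energy_pos_beyond_turning:
  assumes x: "x \<in> dom_k \<kappa>" "m \<le> sin_k \<kappa> x"
  shows "0 < weighted_energy x"
proof -
  define r where "r = arcsin_k \<kappa> m"
  have r: "r \<in> dom_k \<kappa>" "r \<le> x" "sin_k \<kappa> r = m"
    using arcsin_k_below[OF x(1) m_pos x(2)] by (simp_all add: r_def)
  have "0 < weighted_energy r"
    using L'_pos_before_turning[of r] r m_pos by (simp add: weighted_energy_def potential_def flux_def)
  also have "weighted_energy r \<le> weighted_energy x"
  proof (rule DERIV_nonneg_imp_nondecreasing[OF \<open>r \<le> x\<close>])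
    fix t assume t: "r \<le> t" "t \<le> x"
    then have t_dom: "t \<in> dom_k \<kappa>"
      using r x by (auto simp: dom_k_def less_R_k_iff)
    then have "0 \<le> 2 * sin_k \<kappa> t * cos_k \<kappa> t * (L t)\<^sup>2"
      using sin_k_pos[OF t_dom] cos_k_pos[of t \<kappa>] by (simp add: dom_k_def)
    with weighted_energy_has_real_derivative[OF t_dom]
    show "\<exists>d. (weighted_energy has_real_derivative d) (at t) \<and> 0 \<le> d"
      by blast
  qed
  finally show ?thesis .
qed

lemma L'_not_vanishing_beyond_turning:
  assumes a: "a \<in> dom_k \<kappa>" "m \<le> sin_k \<kappa> a" and b: "a < b" "b \<in> dom_k \<kappa>"
  shows "\<exists>t\<in>{a<..<b}. L' t \<noteq> 0"
proof (rule ccontr)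
  assume "\<not> (\<exists>t\<in>{a<..<b}. L' t \<noteq> 0)"
  then have L'_zero: "\<And>t. a < t \<Longrightarrow> t < b \<Longrightarrow> L' t = 0"
    by auto
  define y where "y = (a + b) / 2"
  have y: "a < y" "y < b" "y \<in> dom_k \<kappa>"
    using a b by (auto simp: y_def dom_k_def less_R_k_iff)
  have "0 < min (y - a) (b - y)"
    using y by simp
  moreover have "\<forall>y'. \<bar>y - y'\<bar> < min (y - a) (b - y) \<longrightarrow> L' y = L' y'"
    using L'_zero y by (auto simp: abs_less_iff)
  ultimately have "L'' y = 0"
    by (rule DERIV_local_const[OF L'_deriv[OF y(3)]])
  moreover have "m < sin_k \<kappa> y"
    using a y sin_k_strict_mono[of a y \<kappa>] by (auto simp: dom_k_def)
  ultimately have "L y = 0"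
    using ode[OF y(3)] L'_zero[OF y(1,2)] potential_pos[OF y(3)] by (simp add: potential_def)
  then have "weighted_energy y = 0"
    using L'_zero[OF y(1,2)] by (simp add: weighted_energy_def flux_def)
  with weighted_energy_pos_beyond_turning[OF y(3)] \<open>m < sin_k \<kappa> y\<close> show False
    by simp
qed

lemma energy_strict_antimono_beyond_turning:
  assumes a: "a \<in> dom_k \<kappa>" "m < sin_k \<kappa> a" and b: "a < b" "b \<in> dom_k \<kappa>"
  shows "energy b < energy a"
proof -
  have t: "t \<in> dom_k \<kappa>" "0 < potential t" "0 < sin_k \<kappa> t" "0 < cos_k \<kappa> t"
    if "a \<le> t" "t \<le> b" for t
  proof -
    show t_dom: "t \<in> dom_k \<kappa>"
      using that a b by (auto simp: dom_k_def less_R_k_iff)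
    have "sin_k \<kappa> a \<le> sin_k \<kappa> t"
      using that a sin_k_strict_mono[of a t \<kappa>] t_dom by (cases "a = t") (auto simp: dom_k_def)
    then show "0 < potential t"
      using a(2) potential_pos[OF t_dom] by simp
    show "0 < sin_k \<kappa> t"
      by (rule sin_k_pos[OF t_dom])
    show "0 < cos_k \<kappa> t"
      using t_dom by (intro cos_k_pos) (auto simp: dom_k_def)
  qed
  define D where "D t = 2 * sin_k \<kappa> t * cos_k \<kappa> t * (flux t)\<^sup>2 / (potential t)\<^sup>2" for t
  have deriv: "(energy has_real_derivative - D t) (at t)" if "a \<le> t" "t \<le> b" for t
    using energy_has_real_derivative[of t] t[OF that] by (simp add: D_def)
  have D_nonneg: "0 \<le> D t" if "a \<le> t" "t \<le> b" for t
    using t[OF that] by (simp add: D_def)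
  have antimono: "energy v \<le> energy u" if "a \<le> u" "u \<le> v" "v \<le> b" for u v
  proof (rule DERIV_nonpos_imp_nonincreasing[OF \<open>u \<le> v\<close>])
    fix t assume "u \<le> t" "t \<le> v"
    with that have "a \<le> t" "t \<le> b" by auto
    with deriv D_nonneg show "\<exists>d. (energy has_real_derivative d) (at t) \<and> d \<le> 0"
      by (intro exI[of _ "- D t"]) simp
  qed
  show ?thesis
  proof (rule ccontr)
    assume not_less: "\<not> energy b < energy a"
    have const: "energy t = energy a" if "a \<le> t" "t \<le> b" for t
    proof -
      have "energy t \<le> energy a" "energy b \<le> energy t"
        using antimono that by auto
      with not_less show ?thesis by linarith
    qed
    have "L' t = 0" if "a < t" "t < b" for t
    proof -
      have "(energy has_real_derivative - D t) (at t)"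
        using deriv that by simp
      moreover have "0 < min (t - a) (b - t)"
        using that by simp
      moreover have "\<forall>t'. \<bar>t - t'\<bar> < min (t - a) (b - t) \<longrightarrow> energy t = energy t'"
      proof (intro allI impI)
        fix t' assume "\<bar>t - t'\<bar> < min (t - a) (b - t)"
        then have "a \<le> t'" "t' \<le> b"
          by (auto simp: abs_less_iff)
        then show "energy t = energy t'"
          using const[of t] const[of t'] that by simp
      qed
      ultimately have "- D t = 0"
        by (rule DERIV_local_const)
      with t[of t] that have "flux t = 0"
        by (simp add: D_def)
      with t[of t] that show ?thesis
        by (simp add: flux_def)
    qed
    with L'_not_vanishing_beyond_turning[of a b] a b show False
      by auto
  qed
qed

lemma abs_L_strict_antimono_on_extrema:
  assumes "\<rho>1 \<in> dom_k \<kappa>" "\<rho>2 \<in> dom_k \<kappa>" "\<rho>1 < \<rho>2"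
    and "local_extremum_at L \<rho>1" "local_extremum_at L \<rho>2"
  shows "\<bar>L \<rho>2\<bar> < \<bar>L \<rho>1\<bar>"
proof -
  have "L' \<rho>1 = 0" "L' \<rho>2 = 0"
    using local_extremum_at_imp_deriv_zero[OF assms(4) L_deriv[OF assms(1)]]
      local_extremum_at_imp_deriv_zero[OF assms(5) L_deriv[OF assms(2)]] by auto
  moreover have "energy \<rho>2 < energy \<rho>1"
    using energy_strict_antimono_beyond_turning[OF assms(1) extremum_beyond_turning[OF assms(1,4)]
        assms(3,2)] .
  ultimately have "(L \<rho>2)\<^sup>2 < (L \<rho>1)\<^sup>2"
    by (simp add: energy_def flux_def)
  then show ?thesis
    by (metis abs_le_square_iff not_less)
qed

end

theorem mainTheorem3:
  fixes \<kappa> m :: real and L L' L'' :: "real \<Rightarrow> real"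
  assumes m_pos: "m > 0"
    and regular: "continuous_on {\<rho>. 0 \<le> \<rho> \<and> ereal \<rho> < R_k \<kappa>} L"
    and d1: "\<And>\<rho>. \<rho> \<in> dom_k \<kappa> \<Longrightarrow> (L has_real_derivative L' \<rho>) (at \<rho>)"
    and d2: "\<And>\<rho>. \<rho> \<in> dom_k \<kappa> \<Longrightarrow> (L' has_real_derivative L'' \<rho>) (at \<rho>)"
    and ode: "\<And>\<rho>. \<rho> \<in> dom_k \<kappa> \<Longrightarrow>
       (sin_k \<kappa> \<rho>)\<^sup>2 * L'' \<rho> + sin_k \<kappa> \<rho> * cos_k \<kappa> \<rho> * L' \<rho>
         + ((sin_k \<kappa> \<rho>)\<^sup>2 - m\<^sup>2) * L \<rho> = 0"
    and pos: "\<exists>\<epsilon>>0. \<forall>\<rho>. 0 < \<rho> \<and> \<rho> < \<epsilon> \<longrightarrow> L \<rho> > 0"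
  shows "(\<forall>\<rho>1 \<rho>2. \<rho>1 \<in> dom_k \<kappa> \<and> \<rho>2 \<in> dom_k \<kappa> \<and> \<rho>1 < \<rho>2
            \<and> local_extremum_at L \<rho>1 \<and> local_extremum_at L \<rho>2
            \<longrightarrow> \<bar>L \<rho>2\<bar> < \<bar>L \<rho>1\<bar>)
       \<and> (\<forall>\<rho>1. \<rho>1 \<in> dom_k \<kappa> \<and> local_extremum_at L \<rho>1
            \<and> (\<forall>\<sigma>. 0 < \<sigma> \<and> \<sigma> < \<rho>1 \<longrightarrow> \<not> local_extremum_at L \<sigma>)
            \<longrightarrow> arcsin_k \<kappa> m \<le> \<rho>1)"
proof -
  interpret sin_k_bessel_solution \<kappa> m L L' L''
    using assms by unfold_locales
  show ?thesis
    using abs_L_strict_antimono_on_extrema arcsin_k_le_extremum by blast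
qed

end
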